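(* Let $p\in\mathbb N$, let $U_j\ne0$, $j=1,2,\dots$, be given numbers, and let numbers $F_j$, $j\ge -p$, satisfy $F_{-p}=\dots=F_p=1$ and $$U_j=\frac{F_{j-p-1}F_{j+p}}{F_{j-1}F_j},\qquad j=1,2,\dots.$$ Then $$F_j=\prod_{i=1}^j U_i^{\lfloor\frac{j-i}{p}\rfloor-\lfloor\frac{j-i}{p+1}\rfloor},\qquad j=1,2,\dots.$$ *)

theory Defs
  imports Complex_Main
begin

end

theory Submission
  imports Defs
begin

text \<open>
  Let \<open>e m = \<lfloor>m/p\<rfloor> - \<lfloor>m/(p+1)\<rfloor>\<close> for \<open>m \<ge> 0\<close> and \<open>e m = 0\<close> for \<open>m < 0\<close>. A computation with
  floors gives \<open>e (m+p) + e (m-p-1) = [m = 0] + e (m-1) + e m\<close>, so the products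
  \<open>G j = (\<Prod>i\<ge>1. U i ^ e (j-i))\<close> satisfy \<open>G (k+p) * G (k-p-1) = U k * G (k-1) * G k\<close>, which is
  the recurrence for \<open>F\<close> cleared of denominators, and \<open>G j = 1\<close> for \<open>j \<le> p\<close>. As \<open>U k \<noteq> 0\<close>
  forces \<open>F (k-p-1) \<noteq> 0\<close>, the recurrence determines \<open>F (k+p)\<close> from earlier values, and
  \<open>F = G\<close> follows by induction.
\<close>

definition div_gap :: "int \<Rightarrow> int \<Rightarrow> int" where
  "div_gap P m = (if m < 0 then 0 else m div P - m div (P + 1))"

lemma div_gap_eq_0:
  assumes "P \<ge> 1" and "m < P"
  shows "div_gap P m = 0"
  using assms by (simp add: div_gap_def)

lemma div_diff_shift_identity:
  fixes P m :: int
  assumes "P \<ge> 1"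
  shows "(m + P) div P - (m + P) div (P + 1) + ((m - P - 1) div P - (m - P - 1) div (P + 1))
       = (m - 1) div P - (m - 1) div (P + 1) + (m div P - m div (P + 1))"
proof -
  have "(m + P) div P = m div P + 1"
    using assms by simp
  moreover have "(m + P) div (P + 1) = (m - 1) div (P + 1) + 1"
    using div_add_self2[of "P + 1" "m - 1"] assms by (simp add: algebra_simps)
  moreover have "(m - P - 1) div P = (m - 1) div P - 1"
    using div_add_self2[of P "m - P - 1"] assms by (simp add: algebra_simps)
  moreover have "(m - P - 1) div (P + 1) = m div (P + 1) - 1"
    using div_add_self2[of "P + 1" "m - P - 1"] assms by (simp add: algebra_simps)
  ultimately show ?thesis by simp
qed

lemma div_gap_recurrence:
  assumes "P \<ge> 1"
  shows "div_gap P (m + P) + div_gap P (m - P - 1) = of_bool (m = 0) + div_gap P (m - 1) + div_gap P m"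
proof -
  consider "m < - P" | "- P \<le> m \<and> m < 0" | "m = 0" | "0 < m \<and> m \<le> P" | "m > P"
    by linarith
  then show ?thesis
  proof cases
    case 1 then show ?thesis using assms by (simp add: div_gap_def)
  next
    case 2
    then have "(m + P) div P = 0" "(m + P) div (P + 1) = 0"
      using assms by (simp_all add: div_pos_pos_trivial)
    with 2 show ?thesis by (simp add: div_gap_def)
  next
    case 3 then show ?thesis using assms by (simp add: div_gap_def)
  next
    case 4
    then show ?thesis
      using assms div_add_self2[of "P + 1" "m - 1"] by (simp add: div_gap_def algebra_simps)
  next
    case 5
    then show ?thesis
      using assms div_diff_shift_identity[OF assms, of m] by (simp add: div_gap_def)
  qed
qed

definition div_gap_prod :: "(int \<Rightarrow> 'a::field) \<Rightarrow> int \<Rightarrow> int \<Rightarrow> 'a" where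
  "div_gap_prod U P j = (\<Prod>i = 1..j. U i powi div_gap P (j - i))"

lemma div_gap_prod_extend:
  assumes "j \<le> N"
  shows "div_gap_prod U P j = (\<Prod>i = 1..N. U i powi div_gap P (j - i))"
  unfolding div_gap_prod_def
  by (rule prod.mono_neutral_left) (use assms in \<open>auto simp: div_gap_def\<close>)

lemma div_gap_prod_eq_1:
  assumes "P \<ge> 1" and "j \<le> P"
  shows "div_gap_prod U P j = 1"
  unfolding div_gap_prod_def using assms by (intro prod.neutral) (simp add: div_gap_eq_0)

lemma div_gap_prod_recurrence:
  fixes U :: "int \<Rightarrow> 'a::field"
  assumes P: "P \<ge> 1" and k: "k \<ge> 1" and U_nz: "\<And>i. 1 \<le> i \<Longrightarrow> U i \<noteq> 0"
  shows "div_gap_prod U P (k + P) * div_gap_prod U P (k - P - 1)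
       = U k * (div_gap_prod U P (k - 1) * div_gap_prod U P k)"
proof -
  let ?N = "k + P"
  let ?e = "div_gap P"
  have "div_gap_prod U P (k + P) * div_gap_prod U P (k - P - 1)
      = (\<Prod>i = 1..?N. U i powi ?e (k + P - i) * U i powi ?e (k - P - 1 - i))"
    using P by (simp add: div_gap_prod_extend[of _ ?N] prod.distrib)
  also have "\<dots> = (\<Prod>i = 1..?N. U i powi (?e (k - i + P) + ?e (k - i - P - 1)))"
    by (intro prod.cong) (simp_all add: power_int_add U_nz algebra_simps)
  also have "\<dots> = (\<Prod>i = 1..?N. U i powi (of_bool (k = i) + ?e (k - i - 1) + ?e (k - i)))"
    using div_gap_recurrence[OF P] by simp
  also have "\<dots> = (\<Prod>i = 1..?N. (if i = k then U k else 1) * (U i powi ?e (k - 1 - i) * U i powi ?e (k - i)))"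
    by (intro prod.cong) (simp_all add: power_int_add U_nz algebra_simps)
  also have "\<dots> = U k * (div_gap_prod U P (k - 1) * div_gap_prod U P k)"
    using k P by (simp add: div_gap_prod_extend[of _ ?N] prod.distrib)
  finally show ?thesis .
qed

lemma recurrence_solutions_agree:
  fixes F G :: "int \<Rightarrow> 'a::field" and P :: int
  assumes "1 \<le> P"
    and init: "\<And>j. - P \<le> j \<Longrightarrow> j \<le> P \<Longrightarrow> F j = G j"
    and F_rec: "\<And>k. 1 \<le> k \<Longrightarrow> F (k + P) * F (k - P - 1) = c k * (F (k - 1) * F k)"
    and G_rec: "\<And>k. 1 \<le> k \<Longrightarrow> G (k + P) * G (k - P - 1) = c k * (G (k - 1) * G k)"
    and F_nz: "\<And>k. 1 \<le> k \<Longrightarrow> F (k - P - 1) \<noteq> 0"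
    and "- P \<le> j"
  shows "F j = G j"
proof -
  have "F (int n - P) = G (int n - P)" for n
  proof (induction n rule: less_induct)
    case (less n)
    show ?case
    proof (cases "int n - P \<le> P")
      case True
      then show ?thesis using init by simp
    next
      case False
      define k where "k = int n - 2 * P"
      have k: "1 \<le> k" and n: "int n - P = k + P"
        using False by (simp_all add: k_def)
      have IH: "F m = G m" if "- P \<le> m" "m < k + P" for m
        using less[of "nat (m + P)"] that n by simp
      have "F (k - P - 1) = G (k - P - 1)" "F (k - 1) = G (k - 1)" "F k = G k"
        using IH k \<open>1 \<le> P\<close> by simp_all
      with F_rec[OF k] G_rec[OF k] F_nz[OF k] show ?thesis
        unfolding n by (metis mult_cancel_right)
    qed
  qed
  from this[of "nat (j + P)"] show ?thesis
    using \<open>- P \<le> j\<close> by simp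
qed

lemma div_gap_eq_floor:
  assumes "0 \<le> m"
  shows "div_gap (int p) m = \<lfloor>real_of_int m / real p\<rfloor> - \<lfloor>real_of_int m / real (p + 1)\<rfloor>"
proof -
  have "real p = of_int (int p)" "real (p + 1) = of_int (int p + 1)"
    by simp_all
  then show ?thesis
    using assms by (simp only: div_gap_def floor_divide_of_int_eq) simp
qed

theorem proposition5:
  fixes p :: nat and U :: "int \<Rightarrow> complex" and F :: "int \<Rightarrow> complex"
  assumes p_pos: "p \<ge> 1"
    and U_nz: "\<forall>j\<ge>1. U j \<noteq> 0"
    and F_init: "\<forall>j. - int p \<le> j \<and> j \<le> int p \<longrightarrow> F j = 1"
    and rec: "\<forall>j\<ge>1. U j = F (j - int p - 1) * F (j + int p) / (F (j - 1) * F j)"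
  shows "\<forall>j\<ge>1. F j = (\<Prod>i=1..j. U i powi
            (\<lfloor>real_of_int (j - i) / real p\<rfloor> - \<lfloor>real_of_int (j - i) / real (p + 1)\<rfloor>))"
proof (intro allI impI)
  fix j :: int
  assume "1 \<le> j"
  define P where "P = int p"
  have P: "1 \<le> P"
    using p_pos by (simp add: P_def)
  have F_nz: "F (k - P - 1) \<noteq> 0" and F_rec: "F (k + P) * F (k - P - 1) = U k * (F (k - 1) * F k)"
    if "1 \<le> k" for k
  proof -
    have "U k = F (k - P - 1) * F (k + P) / (F (k - 1) * F k)" "U k \<noteq> 0"
      using rec U_nz that by (simp_all add: P_def)
    then show "F (k - P - 1) \<noteq> 0" "F (k + P) * F (k - P - 1) = U k * (F (k - 1) * F k)"
      by (auto simp: field_simps split: if_splits)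
  qed
  have "F j = div_gap_prod U P j"
  proof (rule recurrence_solutions_agree[where c = U and P = P])
    show "F i = div_gap_prod U P i" if "- P \<le> i" "i \<le> P" for i
      using F_init that P by (simp add: P_def div_gap_prod_eq_1)
    show "div_gap_prod U P (k + P) * div_gap_prod U P (k - P - 1)
        = U k * (div_gap_prod U P (k - 1) * div_gap_prod U P k)" if "1 \<le> k" for k
      using U_nz by (intro div_gap_prod_recurrence[OF P that]) simp
  qed (use P F_rec F_nz \<open>1 \<le> j\<close> in auto)
  then show "F j = (\<Prod>i=1..j. U i powi
            (\<lfloor>real_of_int (j - i) / real p\<rfloor> - \<lfloor>real_of_int (j - i) / real (p + 1)\<rfloor>))"
    unfolding div_gap_prod_def P_def by (simp add: div_gap_eq_floor)
qed

end
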